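(* Let $X$ be a Tychonoff space. Then $C(X)=T''(X)$ if and only if $X$ is an almost $P$-space.
   Context: $C(X)$ is the ring of real-valued continuous functions on $X$. A cozero set in $X$ is a set $coz(g)=\{x: g(x)\neq 0\}$ with $g\in C(X)$; its complement $Z(g)$ is a zero set. $T''(X)$ is the set of all functions $f\colon X\to\mathbb{R}$ for which there is a dense cozero set $U$ of $X$ with $f|_U$ continuous. $X$ is an almost $P$-space if every non-empty $G_\delta$-set of $X$ (equivalently, for Tychonoff $X$, every non-empty zero set) has non-empty interior. *)

theory Defs
  imports "HOL-Analysis.Analysis"
begin

definition tychonoff_space :: "'a topology \<Rightarrow> bool" where
  "tychonoff_space X \<longleftrightarrow> completely_regular_space X \<and> t1_space X"

definition Cfun :: "'a topology \<Rightarrow> ('a \<Rightarrow> real) set" where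
  "Cfun X = {f. continuous_map X euclideanreal f}"

definition cozero_set :: "'a topology \<Rightarrow> 'a set \<Rightarrow> bool" where
  "cozero_set X U \<longleftrightarrow>
     (\<exists>g. continuous_map X euclideanreal g \<and> U = {x \<in> topspace X. g x \<noteq> 0})"

definition dense_in :: "'a topology \<Rightarrow> 'a set \<Rightarrow> bool" where
  "dense_in X U \<longleftrightarrow> U \<subseteq> topspace X \<and> X closure_of U = topspace X"

definition T2fun :: "'a topology \<Rightarrow> ('a \<Rightarrow> real) set" where
  "T2fun X = {f. \<exists>U. cozero_set X U \<and> dense_in X U \<and>
                     continuous_map (subtopology X U) euclideanreal f}"

definition almost_P_space :: "'a topology \<Rightarrow> bool" where
  "almost_P_space X \<longleftrightarrow>
     (\<forall>S. gdelta_in X S \<and> S \<noteq> {} \<longrightarrow> X interior_of S \<noteq> {})"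

end

theory Submission
  imports Defs
begin

text \<open>A function in \<open>T''(X)\<close> is continuous on a dense cozero set, so \<open>C(X) = T''(X)\<close> holds
exactly when \<open>X\<close> is its only dense cozero set: if \<open>coz g\<close> is a proper dense cozero set, the
indicator of \<open>Z g\<close> vanishes on \<open>coz g\<close> but is discontinuous, as \<open>Z g\<close> is not open.
A cozero set is dense iff its zero set has empty interior. Zero sets are \<open>G\<^sub>\<delta>\<close>, and in a
completely regular space every point of a \<open>G\<^sub>\<delta>\<close>-set \<open>\<Inter>\<^sub>n C\<^sub>n\<close> lies in a zero set inside it,
namely that of \<open>\<Sum>\<^sub>n 2\<^sup>-\<^sup>n h\<^sub>n\<close> for Urysohn functions \<open>h\<^sub>n\<close> separating the point from the
complement of \<open>C\<^sub>n\<close>. Hence the same condition characterises almost \<open>P\<close>-spaces.\<close>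

lemma gdelta_in_continuous_map_preimage:
  assumes f: "continuous_map X Y f" and S: "gdelta_in Y S"
  shows "gdelta_in X {x \<in> topspace X. f x \<in> S}"
proof -
  obtain C :: "nat \<Rightarrow> 'b set"
    where C: "\<And>n. openin Y (C n)" "\<And>n. C (Suc n) \<subseteq> C n" and S_eq: "\<Inter>(range C) = S"
    using S unfolding gdelta_in_descending by blast
  define D where "D n = {x \<in> topspace X. f x \<in> C n}" for n
  have "openin X (D n)" for n
    unfolding D_def using f C(1) by (rule openin_continuous_map_preimage)
  moreover have "D (Suc n) \<subseteq> D n" for n
    using C(2) unfolding D_def by blast
  moreover have "\<Inter>(range D) = {x \<in> topspace X. f x \<in> S}"
    using S_eq unfolding D_def by blast
  ultimately show ?thesis
    unfolding gdelta_in_descending by blast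
qed

lemma gdelta_in_zero_set:
  assumes "continuous_map X euclideanreal g"
  shows "gdelta_in X {x \<in> topspace X. g x = 0}"
proof -
  have "gdelta_in euclideanreal {0}"
    by (simp add: closed_imp_gdelta_in metrizable_space_euclidean)
  then have "gdelta_in X {x \<in> topspace X. g x \<in> {0}}"
    by (rule gdelta_in_continuous_map_preimage[OF assms])
  then show ?thesis
    by simp
qed

lemma continuous_map_uniform_limit_euclidean:
  fixes g :: "'a \<Rightarrow> 'b::metric_space"
  assumes "\<forall>\<^sub>F n in F. continuous_map X euclidean (f n)"
    and lim: "uniform_limit (topspace X) f g F" and "F \<noteq> bot"
  shows "continuous_map X euclidean g"
proof -
  have "continuous_map X Met_TC.mtopology g"
  proof (rule Met_TC.continuous_map_uniform_limit)
    show "\<forall>\<^sub>F n in F. \<forall>x\<in>topspace X. g x \<in> UNIV \<and> dist (f n x) (g x) < e" if "0 < e" for e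
      using uniform_limitD[OF lim that] by simp
  qed (use assms in \<open>simp_all add: mtopology_is_euclidean\<close>)
  then show ?thesis
    by (simp add: mtopology_is_euclidean)
qed

lemma continuous_map_suminf_real:
  assumes cont: "\<And>n. continuous_map X euclideanreal (h n)"
    and bound: "\<And>n x. x \<in> topspace X \<Longrightarrow> \<bar>h n x\<bar> \<le> M n" and "summable M"
  shows "continuous_map X euclideanreal (\<lambda>x. \<Sum>n. h n x)"
proof (rule continuous_map_uniform_limit_euclidean)
  show "uniform_limit (topspace X) (\<lambda>N x. \<Sum>n<N. h n x) (\<lambda>x. \<Sum>n. h n x) sequentially"
    using bound \<open>summable M\<close> by (intro Weierstrass_m_test) auto
  show "\<forall>\<^sub>F N in sequentially. continuous_map X euclideanreal (\<lambda>x. \<Sum>n<N. h n x)"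
    using cont by (intro always_eventually allI continuous_intros) auto
qed simp

lemma completely_regular_gdelta_in_contains_zero_set:
  assumes cr: "completely_regular_space X" and S: "gdelta_in X S" and "x \<in> S"
  obtains g where "continuous_map X euclideanreal g" "g x = 0" "{y \<in> topspace X. g y = 0} \<subseteq> S"
proof -
  obtain C :: "nat \<Rightarrow> 'a set" where C_open: "\<And>n. openin X (C n)" and S_eq: "\<Inter>(range C) = S"
    using S unfolding gdelta_in_descending by blast
  have h_ex: "\<exists>h. continuous_map X (top_of_set {0..1::real}) h \<and> h x = 0
      \<and> h ` (topspace X - C n) \<subseteq> {1}" for n
  proof (rule cr[unfolded completely_regular_space_def, rule_format, OF conjI])
    show "closedin X (topspace X - C n)"
      using C_open by blast
    show "x \<in> topspace X - (topspace X - C n)"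
      using \<open>x \<in> S\<close> S_eq gdelta_in_subset[OF S] by blast
  qed
  obtain h where h: "\<And>n. continuous_map X (top_of_set {0..1::real}) (h n) \<and> h n x = 0
      \<and> h n ` (topspace X - C n) \<subseteq> {1}"
    using h_ex by metis
  have h_cont: "continuous_map X euclideanreal (h n)" for n
    using h[of n] by (simp add: continuous_map_in_subtopology)
  have h_range: "h n y \<in> {0..1}" if "y \<in> topspace X" for n y
    using h[of n] that by (auto simp: continuous_map_in_subtopology Pi_iff)
  define g where "g y = (\<Sum>n. (1/2::real)^n * h n y)" for y
  have geom: "summable (\<lambda>n. (1/2::real)^n)"
    by simp
  have term_bound: "\<bar>(1/2)^n * h n y\<bar> \<le> (1/2::real)^n" if "y \<in> topspace X" for n y
    using h_range[OF that, of n] by (simp add: abs_mult mult_le_cancel_left1)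
  have "continuous_map X euclideanreal g"
    unfolding g_def
  proof (rule continuous_map_suminf_real[OF _ term_bound geom])
    show "continuous_map X euclideanreal (\<lambda>y. (1/2)^n * h n y)" for n
      using h_cont by (intro continuous_intros)
  qed
  moreover have "g x = 0"
    unfolding g_def by (simp add: h)
  moreover have "{y \<in> topspace X. g y = 0} \<subseteq> S"
  proof clarify
    fix y assume y: "y \<in> topspace X" "g y = 0"
    have "summable (\<lambda>n. (1/2::real)^n * h n y)"
      using term_bound[OF y(1)] by (intro summable_comparison_test[OF _ geom]) auto
    moreover have "0 \<le> (1/2::real)^n * h n y" for n
      using h_range[OF y(1)] by simp
    ultimately have hy: "h n y = 0" for n
      using y(2) suminf_eq_zero_iff unfolding g_def by fastforce
    have "y \<in> C n" for n
      using h[of n] hy[of n] y(1) by (force simp: image_subset_iff)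
    then show "y \<in> S"
      using S_eq by blast
  qed
  ultimately show ?thesis
    using that by blast
qed

lemma dense_in_iff_interior_of_complement_empty:
  assumes "U \<subseteq> topspace X"
  shows "dense_in X U \<longleftrightarrow> X interior_of (topspace X - U) = {}"
  using assms closure_of_subset_topspace[of X U]
  by (auto simp: dense_in_def interior_of_complement)

lemma Cfun_subset_T2fun: "Cfun X \<subseteq> T2fun X"
proof
  fix f assume "f \<in> Cfun X"
  moreover have "cozero_set X (topspace X)"
    unfolding cozero_set_def by (intro exI[of _ "\<lambda>_. 1"]) auto
  moreover have "dense_in X (topspace X)"
    by (simp add: dense_in_def)
  ultimately show "f \<in> T2fun X"
    unfolding Cfun_def T2fun_def by (auto intro!: exI[of _ "topspace X"])
qed

lemma Cfun_eq_T2fun_iff_no_proper_dense_cozero_set: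
  "Cfun X = T2fun X \<longleftrightarrow> (\<forall>U. cozero_set X U \<and> dense_in X U \<longrightarrow> U = topspace X)"
proof
  assume eq: "Cfun X = T2fun X"
  show "\<forall>U. cozero_set X U \<and> dense_in X U \<longrightarrow> U = topspace X"
  proof clarify
    fix U assume coz: "cozero_set X U" and dense: "dense_in X U"
    obtain g :: "'a \<Rightarrow> real" where U: "U = {x \<in> topspace X. g x \<noteq> 0}"
      using coz unfolding cozero_set_def by blast
    define Z where "Z = {x \<in> topspace X. g x = 0}"
    define f where "f x = (if g x = 0 then 1 else 0::real)" for x
    have "continuous_map (subtopology X U) euclideanreal f"
    proof (rule continuous_map_eq[of _ _ "\<lambda>_. 0"])
      show "0 = f x" if "x \<in> topspace (subtopology X U)" for x
        using that by (simp add: f_def U)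
    qed simp
    then have "f \<in> T2fun X"
      unfolding T2fun_def using coz dense by blast
    then have "continuous_map X euclideanreal f"
      using eq[symmetric] by (simp add: Cfun_def)
    then have "openin X {x \<in> topspace X. f x \<in> {1/2<..}}"
      by (rule openin_continuous_map_preimage) simp
    moreover have "{x \<in> topspace X. f x \<in> {1/2<..}} = Z"
      by (auto simp: f_def Z_def)
    ultimately have "Z \<subseteq> X interior_of Z"
      by (simp add: interior_of_openin)
    moreover have "Z = topspace X - U"
      by (auto simp: U Z_def)
    moreover have "U \<subseteq> topspace X"
      by (simp add: U)
    moreover have "X interior_of (topspace X - U) = {}"
      using dense dense_in_iff_interior_of_complement_empty[OF \<open>U \<subseteq> topspace X\<close>] by simp
    ultimately show "U = topspace X"
      by auto
  qed
next
  assume trivial: "\<forall>U. cozero_set X U \<and> dense_in X U \<longrightarrow> U = topspace X"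
  have "T2fun X \<subseteq> Cfun X"
  proof
    fix f assume "f \<in> T2fun X"
    then obtain U where "cozero_set X U" "dense_in X U"
      and cont: "continuous_map (subtopology X U) euclideanreal f"
      unfolding T2fun_def by blast
    then have "U = topspace X"
      using trivial by blast
    then show "f \<in> Cfun X"
      using cont by (simp add: Cfun_def)
  qed
  then show "Cfun X = T2fun X"
    using Cfun_subset_T2fun by blast
qed

lemma almost_P_space_iff_no_proper_dense_cozero_set:
  assumes cr: "completely_regular_space X"
  shows "almost_P_space X \<longleftrightarrow> (\<forall>U. cozero_set X U \<and> dense_in X U \<longrightarrow> U = topspace X)"
proof
  assume aP: "almost_P_space X"
  show "\<forall>U. cozero_set X U \<and> dense_in X U \<longrightarrow> U = topspace X"
  proof clarify
    fix U assume coz: "cozero_set X U" and dense: "dense_in X U"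
    obtain g where g: "continuous_map X euclideanreal g" and U: "U = {x \<in> topspace X. g x \<noteq> 0}"
      using coz unfolding cozero_set_def by blast
    have Z: "topspace X - U = {x \<in> topspace X. g x = 0}"
      by (auto simp: U)
    have "X interior_of (topspace X - U) = {}"
      using dense dense_in_iff_interior_of_complement_empty[of U X] by (simp add: U)
    then have "topspace X - U = {}"
      using aP gdelta_in_zero_set[OF g] unfolding almost_P_space_def Z by blast
    then show "U = topspace X"
      by (auto simp: U)
  qed
next
  assume trivial: "\<forall>U. cozero_set X U \<and> dense_in X U \<longrightarrow> U = topspace X"
  show "almost_P_space X"
    unfolding almost_P_space_def
  proof (intro allI impI notI)
    fix S assume S: "gdelta_in X S \<and> S \<noteq> {}" and empty_interior: "X interior_of S = {}"
    then obtain x where "x \<in> S" by blast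
    with cr S obtain g where g: "continuous_map X euclideanreal g" and "g x = 0"
      and ZS: "{y \<in> topspace X. g y = 0} \<subseteq> S"
      by (metis completely_regular_gdelta_in_contains_zero_set)
    define U where "U = {y \<in> topspace X. g y \<noteq> 0}"
    have "topspace X - U \<subseteq> S"
      using ZS by (auto simp: U_def)
    then have "X interior_of (topspace X - U) = {}"
      using empty_interior interior_of_mono by blast
    then have "U = topspace X"
      using trivial g dense_in_iff_interior_of_complement_empty[of U X]
      by (auto simp: U_def cozero_set_def)
    moreover have "x \<in> topspace X - U"
      using \<open>g x = 0\<close> \<open>x \<in> S\<close> gdelta_in_subset S by (auto simp: U_def)
    ultimately show False
      by blast
  qed
qed

theorem theorem2p2:
  fixes X :: "'a topology"
  assumes "tychonoff_space X"
  shows "Cfun X = T2fun X \<longleftrightarrow> almost_P_space X"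
  using assms
  by (simp add: tychonoff_space_def Cfun_eq_T2fun_iff_no_proper_dense_cozero_set
      almost_P_space_iff_no_proper_dense_cozero_set)

end
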